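(* Let $e\in\mathbb{R}^n$ satisfy $\|e\|=\sqrt n$, and let $0<\beta\le\alpha<\sqrt n$. Assume $\bar s$ lies in the interior of $K_e(\beta)^*$, and assume $\bar x$ solves \[ \min_x\ \bar s^Tx\quad\text{s.t.}\quad x\in e+L,\ x\in K_e(\alpha), \] where $L$ is a linear subspace with $e\notin L$ and $\bar s\notin L^\perp$. Then there exists $\bar s'\in(\bar s+L^\perp)\cap K_e(\alpha)^*$ satisfying $e^T(\bar s-\bar s')\ge\mathcal{C}_1\mathcal{C}_2\|\bar s\|$, where \[ \mathcal{C}_1:=\left(\frac{(n-\alpha^2)\|\bar x\|^2\big(1-(\beta/\alpha)^2\big)}{n-\alpha^2+(\|\bar x\|-\alpha)^2\big(1-(\beta/\alpha)^2\big)}\right)^{1/2},\qquad \mathcal{C}_2:=\frac1n\Big(\alpha\sqrt{n-\beta^2}-\beta\sqrt{n-\alpha^2}\Big). \]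
   Context: $\mathbb{R}^n$ carries the dot product and Euclidean norm $\|\cdot\|$. For $0<\gamma<\sqrt n$, $K_e(\gamma):=\{x:e^Tx\ge\gamma\|x\|\}$ and $K_e(\gamma)^*:=\{s:x^Ts\ge0\ \forall x\in K_e(\gamma)\}$ (which equals $\{s:e^Ts\ge\sqrt{n-\gamma^2}\|s\|\}$). $e+L=\{e+v:v\in L\}$, and $L^\perp$ is the orthogonal complement of $L$. *)

theory Defs
  imports "HOL-Analysis.Analysis"
begin

definition cone_K :: "'a::real_inner \<Rightarrow> real \<Rightarrow> 'a set" where
  "cone_K e \<gamma> = {x. e \<bullet> x \<ge> \<gamma> * norm x}"

definition dual_cone :: "'a::real_inner set \<Rightarrow> 'a set" where
  "dual_cone K = {s. \<forall>x\<in>K. x \<bullet> s \<ge> 0}"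

definition orth_compl :: "'a::real_inner set \<Rightarrow> 'a set" where
  "orth_compl L = {s. \<forall>v\<in>L. v \<bullet> s = 0}"

end

theory Submission
  imports Defs
begin

text \<open>
  Optimality of \<open>x\<close> forces it onto the boundary of \<open>K\<^sub>e(\<alpha>)\<close> (otherwise \<open>s\<close> would be
  orthogonal to \<open>L\<close>), where \<open>y = \<parallel>x\<parallel> e - \<alpha> x\<close> is an outer normal lying in \<open>K\<^sub>e(\<alpha>)\<^sup>*\<close>.
  Every direction \<open>w \<in> L\<close> with \<open>y \<bullet> w > 0\<close> is feasible to first order, so \<open>s \<bullet> w \<ge> 0\<close> there,
  which forces \<open>s = \<mu> y\<close> on \<open>L\<close> for some \<open>\<mu> \<ge> 0\<close>. Then \<open>s' = \<mu> y\<close> is dual feasible with zero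
  duality gap: \<open>e \<bullet> (s - s') = s \<bullet> x\<close>.

  Since \<open>K\<^sub>e(\<beta>)\<^sup>* \<subseteq> K\<^sub>e(\<surd>(n - \<beta>\<^sup>2))\<close>, the angles of \<open>s\<close> and \<open>x\<close> with \<open>e\<close> are bounded, and the
  cosine of the sum of these bounds gives \<open>n (s \<bullet> x) \<ge> n C\<^sub>2 \<parallel>x\<parallel> \<parallel>s\<parallel>\<close>. The claim follows
  because \<open>C\<^sub>1 \<le> \<parallel>x\<parallel>\<close>.
\<close>

definition reject :: "'a::real_inner \<Rightarrow> 'a \<Rightarrow> 'a" where
  "reject e x = x - ((e \<bullet> x) / (e \<bullet> e)) *\<^sub>R e"

lemma inner_reject_right [simp]: "e \<bullet> reject e x = 0"
  by (cases "e = 0") (simp_all add: reject_def inner_diff_right)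

lemma inner_reject_decompose:
  fixes e s x :: "'a::real_inner"
  assumes "e \<noteq> 0"
  shows "(e \<bullet> e) * (s \<bullet> x) = (e \<bullet> s) * (e \<bullet> x) + (e \<bullet> e) * (reject e s \<bullet> reject e x)"
  using assms by (simp add: reject_def inner_diff_left inner_diff_right inner_commute field_simps)

lemma norm_reject_sq:
  fixes e x :: "'a::real_inner"
  assumes "e \<noteq> 0"
  shows "(e \<bullet> e) * (norm (reject e x))\<^sup>2 = (e \<bullet> e) * (norm x)\<^sup>2 - (e \<bullet> x)\<^sup>2"
  using inner_reject_decompose[OF assms, of x x] unfolding power2_norm_eq_inner by (simp add: power2_eq_square)

lemma norm_reject_le:
  fixes e x :: "'a::real_inner"
  assumes e: "e \<bullet> e = n" "0 < n" and x: "x \<in> cone_K e a" and a: "0 \<le> a"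
  shows "sqrt n * norm (reject e x) \<le> sqrt (n - a\<^sup>2) * norm x"
proof -
  have "e \<noteq> 0" using e by auto
  have "(a * norm x)\<^sup>2 \<le> (e \<bullet> x)\<^sup>2"
    using x a by (intro power_mono) (auto simp: cone_K_def)
  then have "n * (norm (reject e x))\<^sup>2 \<le> (n - a\<^sup>2) * (norm x)\<^sup>2"
    using norm_reject_sq[OF \<open>e \<noteq> 0\<close>, of x] e by (simp add: algebra_simps)
  then have "sqrt (n * (norm (reject e x))\<^sup>2) \<le> sqrt ((n - a\<^sup>2) * (norm x)\<^sup>2)"
    by (rule real_sqrt_le_mono)
  then show ?thesis by (simp add: real_sqrt_mult)
qed

lemma cone_K_angle_sum:
  fixes e s x :: "'a::real_inner"
  assumes e: "e \<bullet> e = n" "0 < n" and x: "x \<in> cone_K e a" and s: "s \<in> cone_K e b"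
    and ab: "0 \<le> a" "0 \<le> b"
  shows "(a * b - sqrt (n - a\<^sup>2) * sqrt (n - b\<^sup>2)) * norm x * norm s \<le> n * (s \<bullet> x)"
proof -
  have "e \<noteq> 0" using e by auto
  have ex: "a * norm x \<le> e \<bullet> x" and es: "b * norm s \<le> e \<bullet> s"
    using x s by (auto simp: cone_K_def)
  have "0 \<le> e \<bullet> x" using ex ab(1) by (meson mult_nonneg_nonneg norm_ge_zero order_trans)
  then have "(a * norm x) * (b * norm s) \<le> (e \<bullet> x) * (e \<bullet> s)"
    using ex es ab by (intro mult_mono) auto
  moreover have "(sqrt n * norm (reject e s)) * (sqrt n * norm (reject e x))
      \<le> (sqrt (n - b\<^sup>2) * norm s) * (sqrt (n - a\<^sup>2) * norm x)"
  proof (rule mult_mono[OF norm_reject_le[OF e s ab(2)] norm_reject_le[OF e x ab(1)]])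
    show "0 \<le> sqrt (n - b\<^sup>2) * norm s"
      using e norm_reject_le[OF e s ab(2)] by (smt (verit) mult_nonneg_nonneg norm_ge_zero real_sqrt_ge_zero)
  qed (use e in simp)
  moreover have "- ((sqrt n * norm (reject e s)) * (sqrt n * norm (reject e x)))
      \<le> n * (reject e s \<bullet> reject e x)"
  proof -
    have "- (norm (reject e s) * norm (reject e x)) \<le> reject e s \<bullet> reject e x"
      using norm_cauchy_schwarz[of "- reject e s" "reject e x"] by simp
    then have "n * - (norm (reject e s) * norm (reject e x)) \<le> n * (reject e s \<bullet> reject e x)"
      using e(2) by (intro mult_left_mono) auto
    moreover have "(sqrt n * norm (reject e s)) * (sqrt n * norm (reject e x))
        = n * (norm (reject e s) * norm (reject e x))"
      using real_sqrt_mult_self[of n] e(2) by (simp add: ac_simps)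
    ultimately show ?thesis by (metis minus_mult_right)
  qed
  ultimately have "(a * norm x) * (b * norm s) - (sqrt (n - b\<^sup>2) * norm s) * (sqrt (n - a\<^sup>2) * norm x)
      \<le> (e \<bullet> s) * (e \<bullet> x) + n * (reject e s \<bullet> reject e x)"
    by (simp add: mult.commute)
  also have "\<dots> = n * (s \<bullet> x)" using inner_reject_decompose[OF \<open>e \<noteq> 0\<close>, of s x] e by simp
  finally show ?thesis by (simp add: algebra_simps)
qed

lemma self_in_cone_K: "\<gamma> \<le> norm e \<Longrightarrow> e \<in> cone_K e \<gamma>"
  unfolding cone_K_def by (simp add: dot_square_norm power2_eq_square mult_right_mono)

lemma normal_in_dual_cone_K:
  fixes e x :: "'a::real_inner"
  assumes "0 \<le> \<alpha>"
  shows "norm x *\<^sub>R e - \<alpha> *\<^sub>R x \<in> dual_cone (cone_K e \<alpha>)"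
  unfolding dual_cone_def
proof (intro CollectI ballI)
  fix z assume "z \<in> cone_K e \<alpha>"
  then have "norm x * (\<alpha> * norm z) \<le> norm x * (e \<bullet> z)"
    by (simp add: cone_K_def mult_left_mono)
  moreover have "\<alpha> * (z \<bullet> x) \<le> \<alpha> * (norm z * norm x)"
    using assms norm_cauchy_schwarz[of z x] by (simp add: mult_left_mono)
  ultimately show "0 \<le> z \<bullet> (norm x *\<^sub>R e - \<alpha> *\<^sub>R x)"
    by (simp add: inner_commute algebra_simps)
qed

lemma dual_cone_K_subset:
  fixes e :: "'a::real_inner"
  assumes e: "e \<bullet> e = n" "0 < n" and \<beta>: "0 \<le> \<beta>" "\<beta>\<^sup>2 \<le> n"
  shows "dual_cone (cone_K e \<beta>) \<subseteq> cone_K e (sqrt (n - \<beta>\<^sup>2))"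
proof
  fix s assume s: "s \<in> dual_cone (cone_K e \<beta>)"
  have "e \<noteq> 0" using e by auto
  define A where "A = e \<bullet> s"
  define r where "r = norm (reject e s)"
  define c where "c = sqrt (n * (n - \<beta>\<^sup>2))"
  have nr: "n * r\<^sup>2 = n * (norm s)\<^sup>2 - A\<^sup>2"
    using norm_reject_sq[OF \<open>e \<noteq> 0\<close>, of s] e unfolding r_def A_def by simp
  have c2: "c\<^sup>2 = n * (n - \<beta>\<^sup>2)" and "0 \<le> c" using e \<beta> unfolding c_def by simp_all
  have "\<beta> \<le> norm e"
    using e \<beta> by (simp add: norm_eq_sqrt_inner real_le_rsqrt)
  then have "0 \<le> A"
    using s self_in_cone_K unfolding dual_cone_def A_def by blast
  \<comment> \<open>Test the dual inequality against the vector of K_e(\<beta>) which makes the widest angle with s.\<close>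
  define z where "z = (\<beta> * r) *\<^sub>R e - c *\<^sub>R reject e s"
  have rr: "reject e s \<bullet> reject e s = r\<^sup>2" by (simp add: r_def power2_norm_eq_inner)
  have "(norm z)\<^sup>2 = r\<^sup>2 * (\<beta>\<^sup>2 * n + c\<^sup>2)"
    unfolding z_def power2_norm_eq_inner using e rr
    by (simp add: inner_commute algebra_simps power2_eq_square)
  also have "\<dots> = (r * n)\<^sup>2" using c2 by (simp add: algebra_simps power2_eq_square)
  finally have "norm z = r * n" using e by (simp add: r_def)
  moreover have "e \<bullet> z = \<beta> * (r * n)" using e unfolding z_def by (simp add: inner_diff_right)
  ultimately have "z \<in> cone_K e \<beta>" by (simp add: cone_K_def)
  then have "0 \<le> z \<bullet> s" using s by (simp add: dual_cone_def)
  also have "z \<bullet> s = r * (\<beta> * A - c * r)"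
  proof -
    have "reject e s \<bullet> s = r\<^sup>2"
      using \<open>e \<noteq> 0\<close> unfolding rr[symmetric]
      by (simp add: reject_def inner_diff_left inner_diff_right inner_commute field_simps)
    then show ?thesis
      unfolding z_def A_def by (simp add: power2_eq_square algebra_simps)
  qed
  finally have "c * r \<le> \<beta> * A"
    using \<open>0 \<le> A\<close> \<beta> by (cases "r = 0") (auto simp: r_def zero_le_mult_iff)
  then have "(c * r)\<^sup>2 \<le> (\<beta> * A)\<^sup>2"
    using \<open>0 \<le> c\<close> by (simp add: r_def power_mono)
  then have "(n - \<beta>\<^sup>2) * (n * r\<^sup>2) \<le> \<beta>\<^sup>2 * A\<^sup>2"
    using c2 by (simp add: algebra_simps)
  then have "n * ((n - \<beta>\<^sup>2) * (norm s)\<^sup>2) \<le> n * A\<^sup>2"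
    unfolding nr by (simp add: algebra_simps)
  then have "sqrt ((n - \<beta>\<^sup>2) * (norm s)\<^sup>2) \<le> sqrt (A\<^sup>2)"
    using e by (intro real_sqrt_le_mono) simp
  then show "s \<in> cone_K e (sqrt (n - \<beta>\<^sup>2))"
    using \<open>0 \<le> A\<close> by (simp add: cone_K_def real_sqrt_mult A_def)
qed

lemma eventually_at_right_0_obtain:
  assumes "\<forall>\<^sub>F t in at_right (0::real). P t"
  obtains t where "0 < t" "P t"
proof -
  have "\<forall>\<^sub>F t in at_right (0::real). 0 < t \<and> P t"
    using eventually_at_right_less assms by (rule eventually_conj)
  then show ?thesis
    using eventually_happens'[OF trivial_limit_at_right_real] that by blast
qed

lemma cone_K_interior_step:
  fixes e x v :: "'a::real_inner"
  assumes "\<gamma> * norm x < e \<bullet> x"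
  shows "\<exists>t>0. x + t *\<^sub>R v \<in> cone_K e \<gamma>"
proof -
  have "((\<lambda>t. e \<bullet> (x + t *\<^sub>R v) - \<gamma> * norm (x + t *\<^sub>R v)) \<longlongrightarrow> e \<bullet> x - \<gamma> * norm x) (at_right 0)"
    by (auto intro!: tendsto_eq_intros)
  from order_tendstoD(1)[OF this, of 0]
  have "\<forall>\<^sub>F t in at_right 0. \<gamma> * norm (x + t *\<^sub>R v) < e \<bullet> (x + t *\<^sub>R v)"
    using assms by simp
  then obtain t where "0 < t" "\<gamma> * norm (x + t *\<^sub>R v) < e \<bullet> (x + t *\<^sub>R v)"
    by (rule eventually_at_right_0_obtain)
  then show ?thesis by (auto simp: cone_K_def)
qed

lemma cone_K_boundary_step:
  fixes e x w :: "'a::real_inner"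
  assumes \<alpha>: "0 < \<alpha>" and x: "x \<noteq> 0" "e \<bullet> x = \<alpha> * norm x"
    and w: "0 < (norm x *\<^sub>R e - \<alpha> *\<^sub>R x) \<bullet> w"
  shows "\<exists>t>0. x + t *\<^sub>R w \<in> cone_K e \<alpha>"
proof -
  define q where "q = (norm x *\<^sub>R e - \<alpha> *\<^sub>R x) \<bullet> w"
  define g where "g t = 2 * \<alpha> * q + t * ((e \<bullet> w)\<^sup>2 - \<alpha>\<^sup>2 * (norm w)\<^sup>2)" for t
  have sq: "(e \<bullet> (x + t *\<^sub>R w))\<^sup>2 - (\<alpha> * norm (x + t *\<^sub>R w))\<^sup>2 = t * g t" for t
    using x(2) power2_norm_eq_inner[of x, unfolded power2_eq_square]
    unfolding g_def q_def power_mult_distrib power2_norm_eq_inner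
    by (simp add: inner_commute power2_eq_square algebra_simps)
  have "(g \<longlongrightarrow> 2 * \<alpha> * q) (at_right 0)"
    unfolding g_def by (auto intro!: tendsto_eq_intros)
  from order_tendstoD(1)[OF this, of 0] have "\<forall>\<^sub>F t in at_right 0. 0 < g t"
    using \<alpha> w q_def by simp
  moreover have "((\<lambda>t. e \<bullet> (x + t *\<^sub>R w)) \<longlongrightarrow> \<alpha> * norm x) (at_right 0)"
    using x(2) by (auto intro!: tendsto_eq_intros)
  from order_tendstoD(1)[OF this, of 0] have "\<forall>\<^sub>F t in at_right 0. 0 < e \<bullet> (x + t *\<^sub>R w)"
    using \<alpha> x(1) by simp
  ultimately obtain t where t: "0 < t" "0 < g t" "0 < e \<bullet> (x + t *\<^sub>R w)"
    by (rule eventually_at_right_0_obtain[OF eventually_conj]) auto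
  then have "(\<alpha> * norm (x + t *\<^sub>R w))\<^sup>2 < (e \<bullet> (x + t *\<^sub>R w))\<^sup>2"
    using sq[of t] by (simp add: algebra_simps)
  then have "\<alpha> * norm (x + t *\<^sub>R w) < e \<bullet> (x + t *\<^sub>R w)"
    by (rule power_less_imp_less_base) (use t(3) in linarith)
  then show ?thesis using t(1) by (auto simp: cone_K_def)
qed

lemma nonneg_if_nonneg_perturbed:
  fixes a b :: real
  assumes "\<And>\<epsilon>. 0 < \<epsilon> \<Longrightarrow> 0 \<le> a + \<epsilon> * b"
  shows "0 \<le> a"
proof (rule tendsto_lowerbound)
  show "((\<lambda>\<epsilon>. a + \<epsilon> * b) \<longlongrightarrow> a) (at_right 0)"
    by (auto intro!: tendsto_eq_intros)
  show "\<forall>\<^sub>F \<epsilon> in at_right 0. 0 \<le> a + \<epsilon> * b"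
    using assms by (auto simp: eventually_at_right_less intro: eventually_mono[OF eventually_at_right_less])
qed simp

lemma subspace_halfspace_multiplier:
  fixes s y u :: "'a::real_inner"
  assumes L: "subspace L" and u: "u \<in> L" "y \<bullet> u \<noteq> 0"
    and sign: "\<And>w. w \<in> L \<Longrightarrow> 0 < y \<bullet> w \<Longrightarrow> 0 \<le> s \<bullet> w"
  shows "\<exists>\<mu>\<ge>0. \<forall>v\<in>L. s \<bullet> v = \<mu> * (y \<bullet> v)"
proof -
  obtain p where p: "p \<in> L" "0 < y \<bullet> p"
  proof (cases "0 < y \<bullet> u")
    case False
    then show ?thesis using that[of "- u"] u L by (simp add: subspace_neg)
  qed (use u that in blast)
  define \<mu> where "\<mu> = (s \<bullet> p) / (y \<bullet> p)"
  have "0 \<le> \<mu>" using sign[OF p] p(2) by (simp add: \<mu>_def)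
  moreover have "s \<bullet> v = \<mu> * (y \<bullet> v)" if v: "v \<in> L" for v
  proof -
    define v' where "v' = v - ((y \<bullet> v) / (y \<bullet> p)) *\<^sub>R p"
    have "y \<bullet> v' = 0" using p(2) by (simp add: v'_def inner_diff_right)
    have "0 \<le> \<sigma> * (s \<bullet> v')" for \<sigma>
    proof (rule nonneg_if_nonneg_perturbed)
      fix \<epsilon> :: real assume "0 < \<epsilon>"
      have "\<sigma> *\<^sub>R v' + \<epsilon> *\<^sub>R p \<in> L"
        using L v p(1) by (simp add: v'_def subspace_add subspace_diff subspace_scale)
      moreover have "0 < y \<bullet> (\<sigma> *\<^sub>R v' + \<epsilon> *\<^sub>R p)"
        using \<open>y \<bullet> v' = 0\<close> \<open>0 < \<epsilon>\<close> p(2) by (simp add: inner_add_right)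
      ultimately show "0 \<le> \<sigma> * (s \<bullet> v') + \<epsilon> * (s \<bullet> p)"
        using sign by (fastforce simp: inner_add_right)
    qed
    from this[of 1] this[of "-1"] have "s \<bullet> v' = 0" by simp
    then show ?thesis using p(2) by (simp add: v'_def \<mu>_def inner_diff_right)
  qed
  ultimately show ?thesis by blast
qed

locale cone_K_program =
  fixes e s x :: "'a::real_inner" and L :: "'a set" and \<alpha> :: real
  assumes subspace: "subspace L"
    and e_notin: "e \<notin> L"
    and \<alpha>: "0 < \<alpha>" "\<alpha> < norm e"
    and s_not_orth: "s \<notin> orth_compl L"
    and x_affine: "x - e \<in> L" and x_cone: "x \<in> cone_K e \<alpha>"
    and x_optimal: "\<And>y. y - e \<in> L \<Longrightarrow> y \<in> cone_K e \<alpha> \<Longrightarrow> s \<bullet> x \<le> s \<bullet> y"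
begin

definition normal :: 'a where
  "normal = norm x *\<^sub>R e - \<alpha> *\<^sub>R x"

lemma x_nonzero: "x \<noteq> 0"
  using x_affine e_notin subspace by (auto dest: subspace_neg)

lemma feasible_step_nonneg:
  assumes "v \<in> L" "0 < t" "x + t *\<^sub>R v \<in> cone_K e \<alpha>"
  shows "0 \<le> s \<bullet> v"
proof -
  have "x + t *\<^sub>R v - e \<in> L"
    using subspace x_affine assms(1) by (metis diff_add_eq subspace_add subspace_scale)
  then have "s \<bullet> x \<le> s \<bullet> (x + t *\<^sub>R v)" using x_optimal assms(3) by blast
  then show ?thesis using assms(2) by (simp add: inner_add_right zero_le_mult_iff)
qed

lemma x_on_boundary: "e \<bullet> x = \<alpha> * norm x"
proof (rule ccontr)
  assume "e \<bullet> x \<noteq> \<alpha> * norm x"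
  then have interior: "\<alpha> * norm x < e \<bullet> x" using x_cone by (simp add: cone_K_def)
  have nonneg: "0 \<le> s \<bullet> v" if "v \<in> L" for v
    using cone_K_interior_step[OF interior] feasible_step_nonneg that by blast
  have "s \<in> orth_compl L"
    unfolding orth_compl_def
  proof (intro CollectI ballI)
    fix v assume "v \<in> L"
    then have "- v \<in> L" using subspace by (rule subspace_neg[rotated])
    then show "v \<bullet> s = 0"
      using nonneg[OF \<open>v \<in> L\<close>] nonneg[of "- v"] by (simp add: inner_commute)
  qed
  then show False using s_not_orth by blast
qed

lemma normal_sign:
  assumes "w \<in> L" "0 < normal \<bullet> w"
  shows "0 \<le> s \<bullet> w"
  using cone_K_boundary_step[OF \<alpha>(1) x_nonzero x_on_boundary] assms feasible_step_nonneg
  unfolding normal_def by blast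

lemma normal_inner_x: "normal \<bullet> x = 0"
  using x_on_boundary by (simp add: normal_def inner_diff_left dot_square_norm power2_eq_square)

lemma normal_inner_e: "normal \<bullet> e = norm x * ((norm e)\<^sup>2 - \<alpha>\<^sup>2)"
  using x_on_boundary
  by (simp add: normal_def inner_commute power2_eq_square algebra_simps flip: power2_norm_eq_inner)

lemma dual_certificate:
  "\<exists>s'. s' \<in> (\<lambda>w. s + w) ` orth_compl L \<and> s' \<in> dual_cone (cone_K e \<alpha>) \<and> e \<bullet> (s - s') = s \<bullet> x"
proof -
  have "normal \<bullet> (x - e) \<noteq> 0"
    using normal_inner_x normal_inner_e x_nonzero \<alpha> by (simp add: inner_diff_right power_strict_mono)
  then obtain \<mu> where "0 \<le> \<mu>" and \<mu>: "\<And>v. v \<in> L \<Longrightarrow> s \<bullet> v = \<mu> * (normal \<bullet> v)"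
    using subspace_halfspace_multiplier[OF subspace x_affine _ normal_sign] by blast
  define s' where "s' = \<mu> *\<^sub>R normal"
  have "s' - s \<in> orth_compl L"
    unfolding orth_compl_def
  proof (intro CollectI ballI)
    fix v assume "v \<in> L"
    then show "v \<bullet> (s' - s) = 0"
      using \<mu>[of v] by (simp add: s'_def inner_diff_right inner_commute)
  qed
  then have "s' \<in> (\<lambda>w. s + w) ` orth_compl L"
    by (rule rev_image_eqI) simp
  moreover have "s' \<in> dual_cone (cone_K e \<alpha>)"
    using normal_in_dual_cone_K[of \<alpha> x e] \<alpha> \<open>0 \<le> \<mu>\<close>
    by (simp add: dual_cone_def s'_def normal_def)
  moreover have "e \<bullet> (s - s') = s \<bullet> x"
  proof -
    have "(x - e) \<bullet> (s - s') = 0"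
      using \<open>s' - s \<in> orth_compl L\<close> x_affine by (simp add: orth_compl_def inner_diff_right)
    then show ?thesis
      using normal_inner_x by (simp add: s'_def inner_diff_left inner_diff_right inner_commute)
  qed
  ultimately show ?thesis by blast
qed

end

lemma dual_cone_K_inner_ge:
  fixes e s x :: "'a::real_inner"
  assumes e: "e \<bullet> e = n" "0 < n" and \<alpha>\<beta>: "0 \<le> \<beta>" "\<beta> \<le> \<alpha>" "\<alpha>\<^sup>2 \<le> n"
    and s: "s \<in> dual_cone (cone_K e \<beta>)" and x: "x \<in> cone_K e \<alpha>"
  shows "0 \<le> \<alpha> * sqrt (n - \<beta>\<^sup>2) - \<beta> * sqrt (n - \<alpha>\<^sup>2)"
    and "(\<alpha> * sqrt (n - \<beta>\<^sup>2) - \<beta> * sqrt (n - \<alpha>\<^sup>2)) * norm x * norm s \<le> n * (s \<bullet> x)"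
proof -
  have "\<beta>\<^sup>2 \<le> \<alpha>\<^sup>2" using \<alpha>\<beta> by (intro power_mono)
  then have "sqrt (n - \<alpha>\<^sup>2) \<le> sqrt (n - \<beta>\<^sup>2)" by simp
  then show "0 \<le> \<alpha> * sqrt (n - \<beta>\<^sup>2) - \<beta> * sqrt (n - \<alpha>\<^sup>2)"
    using \<alpha>\<beta> by (auto intro: mult_mono)
  have "s \<in> cone_K e (sqrt (n - \<beta>\<^sup>2))"
    using dual_cone_K_subset[OF e \<alpha>\<beta>(1)] s \<open>\<beta>\<^sup>2 \<le> \<alpha>\<^sup>2\<close> \<alpha>\<beta>(3) by auto
  from cone_K_angle_sum[OF e x this]
  show "(\<alpha> * sqrt (n - \<beta>\<^sup>2) - \<beta> * sqrt (n - \<alpha>\<^sup>2)) * norm x * norm s \<le> n * (s \<bullet> x)"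
    using \<alpha>\<beta> \<open>\<beta>\<^sup>2 \<le> \<alpha>\<^sup>2\<close> by (simp add: mult.commute)
qed

lemma sqrt_shrunk_ratio_le:
  fixes c d r N :: real
  assumes "0 < c" "0 \<le> d" "0 \<le> r" "r \<le> 1" "0 \<le> N"
  shows "sqrt (c * N\<^sup>2 * r / (c + d * r)) \<le> N"
proof -
  have "c * r \<le> c + d * r" using assms by (smt (verit) mult_left_le mult_nonneg_nonneg)
  then have "c * r * N\<^sup>2 \<le> (c + d * r) * N\<^sup>2" by (rule mult_right_mono) simp
  then have "c * N\<^sup>2 * r / (c + d * r) \<le> N\<^sup>2"
    using assms by (simp add: divide_le_eq ac_simps add_pos_nonneg)
  then show ?thesis by (rule real_le_lsqrt[OF assms(5)])
qed

theorem proposition5p1: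
  fixes e s x :: "real ^ 'n" and L :: "(real ^ 'n) set" and \<alpha> \<beta> :: real
  assumes he: "norm e = sqrt (real CARD('n))"
    and hb: "0 < \<beta>" and hba: "\<beta> \<le> \<alpha>" and ha: "\<alpha> < sqrt (real CARD('n))"
    and hs: "s \<in> interior (dual_cone (cone_K e \<beta>))"
    and hL: "subspace L" and heL: "e \<notin> L" and hsL: "s \<notin> orth_compl L"
    and hxfeas: "x \<in> (\<lambda>v. e + v) ` L" "x \<in> cone_K e \<alpha>"
    and hxopt: "\<And>y. y \<in> (\<lambda>v. e + v) ` L \<Longrightarrow> y \<in> cone_K e \<alpha> \<Longrightarrow> s \<bullet> x \<le> s \<bullet> y"
  shows "\<exists>s'. s' \<in> (\<lambda>w. s + w) ` orth_compl L \<and> s' \<in> dual_cone (cone_K e \<alpha>) \<and>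
    e \<bullet> (s - s') \<ge>
      sqrt ((real CARD('n) - \<alpha>\<^sup>2) * (norm x)\<^sup>2 * (1 - (\<beta> / \<alpha>)\<^sup>2)
            / (real CARD('n) - \<alpha>\<^sup>2 + (norm x - \<alpha>)\<^sup>2 * (1 - (\<beta> / \<alpha>)\<^sup>2)))
      * ((1 / real CARD('n)) * (\<alpha> * sqrt (real CARD('n) - \<beta>\<^sup>2) - \<beta> * sqrt (real CARD('n) - \<alpha>\<^sup>2)))
      * norm s"
proof -
  define n where "n = real CARD('n)"
  define C\<^sub>2 where "C\<^sub>2 = \<alpha> * sqrt (n - \<beta>\<^sup>2) - \<beta> * sqrt (n - \<alpha>\<^sup>2)"
  have n: "e \<bullet> e = n" "0 < n" using he by (simp_all add: n_def dot_square_norm)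
  have "0 < \<alpha>" using hb hba by simp
  then have "\<alpha>\<^sup>2 < n" using ha unfolding n_def by (meson not_le real_le_lsqrt less_imp_le)
  interpret cone_K_program e s x L \<alpha>
  proof
    show "\<And>y. y - e \<in> L \<Longrightarrow> y \<in> cone_K e \<alpha> \<Longrightarrow> s \<bullet> x \<le> s \<bullet> y"
      using hxopt by (metis add.commute diff_add_cancel image_eqI)
  qed (use hL heL hsL hxfeas he ha \<open>0 < \<alpha>\<close> in auto)
  obtain s' where s': "s' \<in> (\<lambda>w. s + w) ` orth_compl L" "s' \<in> dual_cone (cone_K e \<alpha>)"
    and gap: "e \<bullet> (s - s') = s \<bullet> x"
    using dual_certificate by blast
  note inner_ge = dual_cone_K_inner_ge[OF n less_imp_le[OF hb] hba less_imp_le[OF \<open>\<alpha>\<^sup>2 < n\<close>]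
      interior_subset[THEN subsetD, OF hs] x_cone, folded C\<^sub>2_def]
  have "sqrt ((n - \<alpha>\<^sup>2) * (norm x)\<^sup>2 * (1 - (\<beta> / \<alpha>)\<^sup>2)
      / (n - \<alpha>\<^sup>2 + (norm x - \<alpha>)\<^sup>2 * (1 - (\<beta> / \<alpha>)\<^sup>2))) * ((1 / n) * C\<^sub>2) * norm s
      \<le> norm x * ((1 / n) * C\<^sub>2) * norm s"
    using \<open>\<alpha>\<^sup>2 < n\<close> \<open>0 < \<alpha>\<close> hb hba inner_ge(1) n(2)
    by (intro mult_right_mono sqrt_shrunk_ratio_le) (auto simp: power_divide divide_le_eq power_mono)
  also have "\<dots> \<le> s \<bullet> x"
    using inner_ge(2) n(2) by (simp add: pos_divide_le_eq mult.commute mult.left_commute)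
  finally show ?thesis
    using s' gap unfolding n_def C\<^sub>2_def by auto
qed

end
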